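(* Consider the fully discrete scheme described in the context (the time discretization of the extended Cahn–Hilliard-type model on a rectangular grid). Assume $h_3\equiv 0$, i.e. no flux is pumped into the system. Then any solution of the scheme satisfies the discrete volume conservation law $$(\psi\tilde\phi^{n+1},1)=(\psi\tilde\phi^{n},1)=(\psi\tilde\phi^{0},1),\qquad n=1,2,\dots,$$ where $(u,v)=\Delta x\,\Delta y\sum_{i=1}^{N_x}\sum_{j=1}^{N_y}u_{i,j}v_{i,j}$.
   Context: Domain and grid: $\Omega=[-\tfrac12L_x,\tfrac12L_x]\times[-\tfrac12L_y,\tfrac12L_y]$ is divided into $N_x\times N_y$ uniform cells with $\Delta x=L_x/N_x$, $\Delta y=L_y/N_y$; grid functions $u_{i,j}$ live at cell centers $i=1,\dots,N_x$, $j=1,\dots,N_y$, with ghost indices $i=0,N_x+1$, $j=0,N_y+1$. For a cell-centered $u$ define face quantities $(A_xu)_{i+\frac12,j}=\tfrac12(u_{i+1,j}+u_{i,j})$, $(D_xu)_{i+\frac12,j}=(u_{i+1,j}-u_{i,j})/\Delta x$ ($i=0,\dots,N_x$), and analogously $(A_yu)_{i,j+\frac12}$, $(D_yu)_{i,j+\frac12}$; for a face function $w$, $(D_xw)_{i,j}=(w_{i+\frac12,j}-w_{i-\frac12,j})/\Delta x$, $(D_yw)_{i,j}=(w_{i,j+\frac12}-w_{i,j-\frac12})/\Delta y$. Set $D_h(a,u)_{i,j}=D_x(A_xa\,D_xu)_{i,j}+D_y(A_ya\,D_yu)_{i,j}$. Given data: a grid function $\psi>0$ (discrete approximation of the characteristic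 function of the original domain $\Omega_1\subset\Omega$) with $\chi=1/\psi$; constants $K>0$, $\alpha\ge0$, $\Gamma>0$, $\Delta t>0$; a positive mobility grid function $\bar M^{n+\frac12}$; time-independent grid functions $h_1,h_2,h_3$; $g(\phi)=f'(\phi)/\sqrt{2f(\phi)+2A}$ for a bulk potential $f$ and constant $A$ with $2f+2A>0$, and $\bar g^{n+\frac12}_{i,j}$ denotes $g$ evaluated at the extrapolation $\tfrac32\tilde\phi^n_{i,j}-\tfrac12\tilde\phi^{n-1}_{i,j}$ ($n\ge1$), or at $\tilde\phi^0_{i,j}$ ($n=0$). Notation $u^{n+\frac12}=\tfrac12(u^{n+1}+u^n)$. For a cell-centered $w$ define $\mathcal B(w)_{i,j}=\tfrac12\big[|D_x\psi|_{i-\frac12,j}(A_xw)_{i-\frac12,j}+|D_x\psi|_{i+\frac12,j}(A_xw)_{i+\frac12,j}+|D_y\psi|_{i,j-\frac12}(A_yw)_{i,j-\frac12}+|D_y\psi|_{i,j+\frac12}(A_yw)_{i,j+\frac12}\big]$. The scheme: given $\tilde\phi^n,q^n$, find $\tilde\phi^{n+1},q^{n+1},\mu_*^{n+\frac12}$ with, at every cell $(i,j)$, (1) $\frac{\tilde\phi^{n+1}-\tilde\phi^n}{\Delta t}=\chi\,D_h(\psi\bar M^{n+\frac12},\chi\mu_*^{n+\frac12})-\chi\,\mathcal B(h_3)$; (2) $\mu_*^{n+\frac12}=\psi\,\bar g^{n+\frac12}q^{n+\frac12}-K\,D_h(\psi,\tilde\phi^{n+\frac12})+\mathcal B\big(\alpha(\tilde\phi^{n+\frac12}-h_1)-h_2+\Gamma^{-1}\frac{\tilde\phi^{n+1}-\tilde\phi^n}{\Delta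 t}\big)$; (3) $q^{n+1}-q^n=\bar g^{n+\frac12}(\tilde\phi^{n+1}-\tilde\phi^n)$. Boundary conditions (discrete homogeneous Neumann): the ghost values of $\tilde\phi^{n},\tilde\phi^{n+1}$, of $\psi$ (hence of $\chi$), and of $\mu_*^{n+\frac12}$ equal the adjacent interior values, e.g. $u_{0,j}=u_{1,j}$, $u_{N_x+1,j}=u_{N_x,j}$, $u_{i,0}=u_{i,1}$, $u_{i,N_y+1}=u_{i,N_y}$. *)

theory Defs
  imports "HOL-Analysis.Analysis"
begin

text \<open>Grid functions are indexed by integer cell indices (i,j); interior cells are
  1..Nx, 1..Ny, ghost cells 0, Nx+1 and 0, Ny+1.  A face function at face
  (i+1/2, j) (resp. (i, j+1/2)) is stored at index (i, j).\<close>

type_synonym grid = "int \<Rightarrow> int \<Rightarrow> real"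

definition Ax :: "grid \<Rightarrow> grid" where
  "Ax u i j = (u (i+1) j + u i j) / 2"
definition Ay :: "grid \<Rightarrow> grid" where
  "Ay u i j = (u i (j+1) + u i j) / 2"
definition Dx :: "real \<Rightarrow> grid \<Rightarrow> grid" where
  "Dx dx u i j = (u (i+1) j - u i j) / dx"
definition Dy :: "real \<Rightarrow> grid \<Rightarrow> grid" where
  "Dy dy u i j = (u i (j+1) - u i j) / dy"

definition dDx :: "real \<Rightarrow> grid \<Rightarrow> grid" where
  "dDx dx w i j = (w i j - w (i-1) j) / dx"
definition dDy :: "real \<Rightarrow> grid \<Rightarrow> grid" where
  "dDy dy w i j = (w i j - w i (j-1)) / dy"

definition Dh :: "real \<Rightarrow> real \<Rightarrow> grid \<Rightarrow> grid \<Rightarrow> grid" where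
  "Dh dx dy a u = (\<lambda>i j. dDx dx (\<lambda>i j. Ax a i j * Dx dx u i j) i j
                        + dDy dy (\<lambda>i j. Ay a i j * Dy dy u i j) i j)"

definition Bop :: "real \<Rightarrow> real \<Rightarrow> grid \<Rightarrow> grid \<Rightarrow> grid" where
  "Bop dx dy psi w i j = (1/2) *
     (\<bar>Dx dx psi (i-1) j\<bar> * Ax w (i-1) j + \<bar>Dx dx psi i j\<bar> * Ax w i j
    + \<bar>Dy dy psi i (j-1)\<bar> * Ay w i (j-1) + \<bar>Dy dy psi i j\<bar> * Ay w i j)"

definition ip :: "real \<Rightarrow> real \<Rightarrow> nat \<Rightarrow> nat \<Rightarrow> grid \<Rightarrow> grid \<Rightarrow> real" where
  "ip dx dy Nx Ny u v = dx * dy * (\<Sum>i\<in>{1..int Nx}. \<Sum>j\<in>{1..int Ny}. u i j * v i j)"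

definition neumann :: "nat \<Rightarrow> nat \<Rightarrow> grid \<Rightarrow> bool" where
  "neumann Nx Ny u \<longleftrightarrow>
     (\<forall>j\<in>{1..int Ny}. u 0 j = u 1 j \<and> u (int Nx + 1) j = u (int Nx) j) \<and>
     (\<forall>i\<in>{1..int Nx}. u i 0 = u i 1 \<and> u i (int Ny + 1) = u i (int Ny))"

definition gfun :: "(real \<Rightarrow> real) \<Rightarrow> real \<Rightarrow> real \<Rightarrow> real" where
  "gfun f A x = deriv f x / sqrt (2 * f x + 2 * A)"

definition gbar :: "(real \<Rightarrow> real) \<Rightarrow> real \<Rightarrow> (nat \<Rightarrow> grid) \<Rightarrow> nat \<Rightarrow> grid" where
  "gbar f A phi n i j =
     (if n = 0 then gfun f A (phi 0 i j)
      else gfun f A ((3/2) * phi n i j - (1/2) * phi (n-1) i j))"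

end

theory Submission
  imports Defs
begin

text \<open>With \<open>h\<^sub>3 = 0\<close>, equation (1) multiplied by \<open>\<psi>\<close> says that \<open>\<psi>(\<phi>\<^sup>n\<^sup>+\<^sup>1 - \<phi>\<^sup>n)/\<Delta>t\<close> is the
  discrete divergence \<open>D\<^sub>h(\<psi>M, \<chi>\<mu>)\<close>. Summed over the interior cells, the face fluxes
  telescope, and the two remaining boundary fluxes vanish because \<open>\<chi>\<mu>\<close> satisfies the
  discrete Neumann condition, so its difference quotient across a boundary face is zero.\<close>

lemma sum_int_telescope:
  "(\<Sum>i\<in>{1..int N}. F i - F (i - 1)) = F (int N) - (F 0 :: real)"
proof (induction N)
  case 0
  then show ?case by simp
next
  case (Suc N)
  have "{1..int (Suc N)} = insert (int N + 1) {1..int N}" by auto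
  then show ?case using Suc by (simp add: add.commute)
qed

lemma sum_dDx: "(\<Sum>i\<in>{1..int N}. dDx dx w i j) = (w (int N) j - w 0 j) / dx"
  unfolding dDx_def
  by (simp add: sum_divide_distrib[symmetric] sum_int_telescope[where F = "\<lambda>i. w i j"])

lemma sum_dDy: "(\<Sum>j\<in>{1..int N}. dDy dy w i j) = (w i (int N) - w i 0) / dy"
  unfolding dDy_def
  by (simp add: sum_divide_distrib[symmetric] sum_int_telescope[where F = "\<lambda>j. w i j"])

lemma neumann_combine:
  assumes "neumann Nx Ny u" and "neumann Nx Ny v"
  shows "neumann Nx Ny (\<lambda>i j. F (u i j) (v i j))"
  using assms unfolding neumann_def by auto

lemma sum_Dh_eq_zero:
  assumes "neumann Nx Ny u"
  shows "(\<Sum>i\<in>{1..int Nx}. \<Sum>j\<in>{1..int Ny}. Dh dx dy a u i j) = 0"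
proof -
  have x_flux: "(\<Sum>i\<in>{1..int Nx}. dDx dx (\<lambda>i j. Ax a i j * Dx dx u i j) i j) = 0"
    if "j \<in> {1..int Ny}" for j
  proof -
    have "u 0 j = u 1 j" "u (int Nx + 1) j = u (int Nx) j"
      using assms that unfolding neumann_def by auto
    then show ?thesis by (simp add: sum_dDx Dx_def)
  qed
  have y_flux: "(\<Sum>j\<in>{1..int Ny}. dDy dy (\<lambda>i j. Ay a i j * Dy dy u i j) i j) = 0"
    if "i \<in> {1..int Nx}" for i
  proof -
    have "u i 0 = u i 1" "u i (int Ny + 1) = u i (int Ny)"
      using assms that unfolding neumann_def by auto
    then show ?thesis by (simp add: sum_dDy Dy_def)
  qed
  have "(\<Sum>i\<in>{1..int Nx}. \<Sum>j\<in>{1..int Ny}. dDx dx (\<lambda>i j. Ax a i j * Dx dx u i j) i j) = 0"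
    by (subst sum.swap) (simp add: x_flux)
  then show ?thesis
    unfolding Dh_def by (simp add: sum.distrib y_flux)
qed

lemma Bop_zero: "Bop dx dy psi (\<lambda>_ _. 0) = (\<lambda>_ _. 0)"
  unfolding Bop_def Ax_def Ay_def by simp

lemma ip_one_flux_update:
  assumes "neumann Nx Ny u"
    and "\<And>i j. i \<in> {1..int Nx} \<Longrightarrow> j \<in> {1..int Ny} \<Longrightarrow> w' i j = w i j + c * Dh dx dy a u i j"
  shows "ip dx dy Nx Ny w' (\<lambda>_ _. 1) = ip dx dy Nx Ny w (\<lambda>_ _. 1)"
proof -
  have "(\<Sum>i\<in>{1..int Nx}. \<Sum>j\<in>{1..int Ny}. w' i j)
      = (\<Sum>i\<in>{1..int Nx}. \<Sum>j\<in>{1..int Ny}. w i j + c * Dh dx dy a u i j)"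
    using assms(2) by (auto intro!: sum.cong)
  also have "\<dots> = (\<Sum>i\<in>{1..int Nx}. \<Sum>j\<in>{1..int Ny}. w i j)
      + c * (\<Sum>i\<in>{1..int Nx}. \<Sum>j\<in>{1..int Ny}. Dh dx dy a u i j)"
    by (simp add: sum.distrib sum_distrib_left)
  finally show ?thesis
    unfolding ip_def by (simp add: sum_Dh_eq_zero[OF assms(1)])
qed

theorem theorem1:
  fixes Lx Ly K alpha Gamma dt A :: real
    and Nx Ny :: nat
    and psi h1 h2 h3 :: grid
    and Mbar :: "nat \<Rightarrow> grid"
    and f :: "real \<Rightarrow> real"
    and phi q mu :: "nat \<Rightarrow> grid"
  defines "dx \<equiv> Lx / real Nx"
    and "dy \<equiv> Ly / real Ny"
    and "chi \<equiv> (\<lambda>i j. 1 / psi i j)"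
  assumes "Lx > 0" and "Ly > 0" and "Nx \<ge> 1" and "Ny \<ge> 1"
    and "K > 0" and "alpha \<ge> 0" and "Gamma > 0" and "dt > 0"
    and psi_pos: "\<forall>i j. psi i j > 0"
    and psi_bc: "neumann Nx Ny psi"
    and M_pos: "\<forall>n i j. Mbar n i j > 0"
    and f_diff: "\<forall>x. f differentiable at x"
    and f_pos: "\<forall>x. 2 * f x + 2 * A > 0"
    and h3_zero: "\<forall>i j. h3 i j = 0"
    and phi_bc: "\<forall>n. neumann Nx Ny (phi n)"
    and mu_bc: "\<forall>n. neumann Nx Ny (mu n)"
    and eq1: "\<forall>n. \<forall>i\<in>{1..int Nx}. \<forall>j\<in>{1..int Ny}.
       (phi (Suc n) i j - phi n i j) / dt
         = chi i j * Dh dx dy (\<lambda>i j. psi i j * Mbar n i j) (\<lambda>i j. chi i j * mu n i j) i j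
           - chi i j * Bop dx dy psi h3 i j"
    and eq2: "\<forall>n. \<forall>i\<in>{1..int Nx}. \<forall>j\<in>{1..int Ny}.
       mu n i j = psi i j * gbar f A phi n i j * ((q (Suc n) i j + q n i j) / 2)
         - K * Dh dx dy psi (\<lambda>i j. (phi (Suc n) i j + phi n i j) / 2) i j
         + Bop dx dy psi (\<lambda>i j. alpha * ((phi (Suc n) i j + phi n i j) / 2 - h1 i j) - h2 i j
                              + (1 / Gamma) * ((phi (Suc n) i j - phi n i j) / dt)) i j"
    and eq3: "\<forall>n. \<forall>i\<in>{1..int Nx}. \<forall>j\<in>{1..int Ny}.
       q (Suc n) i j - q n i j = gbar f A phi n i j * (phi (Suc n) i j - phi n i j)"
  shows "\<forall>n. ip dx dy Nx Ny (\<lambda>i j. psi i j * phi (Suc n) i j) (\<lambda>_ _. 1) = ip dx dy Nx Ny (\<lambda>i j. psi i j * phi n i j) (\<lambda>_ _. 1)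
           \<and> ip dx dy Nx Ny (\<lambda>i j. psi i j * phi n i j) (\<lambda>_ _. 1) = ip dx dy Nx Ny (\<lambda>i j. psi i j * phi 0 i j) (\<lambda>_ _. 1)"
proof -
  have h3_eq: "h3 = (\<lambda>_ _. 0)" using h3_zero by blast
  have step: "ip dx dy Nx Ny (\<lambda>i j. psi i j * phi (Suc n) i j) (\<lambda>_ _. 1)
      = ip dx dy Nx Ny (\<lambda>i j. psi i j * phi n i j) (\<lambda>_ _. 1)" for n
  proof (rule ip_one_flux_update)
    show "neumann Nx Ny (\<lambda>i j. chi i j * mu n i j)"
      unfolding chi_def using neumann_combine[OF psi_bc mu_bc[rule_format]] by simp
    fix i j assume interior: "i \<in> {1..int Nx}" "j \<in> {1..int Ny}"
    have "psi i j > 0" using psi_pos by blast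
    then show "psi i j * phi (Suc n) i j = psi i j * phi n i j
        + dt * Dh dx dy (\<lambda>i j. psi i j * Mbar n i j) (\<lambda>i j. chi i j * mu n i j) i j"
      using eq1[rule_format, OF interior, of n] \<open>dt > 0\<close>
      by (simp add: h3_eq Bop_zero chi_def field_simps)
  qed
  have "ip dx dy Nx Ny (\<lambda>i j. psi i j * phi n i j) (\<lambda>_ _. 1)
      = ip dx dy Nx Ny (\<lambda>i j. psi i j * phi 0 i j) (\<lambda>_ _. 1)" for n
    by (induction n) (simp_all add: step)
  with step show ?thesis by simp
qed

end
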